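(* Let $m\ge 1$ and let $M \subseteq \{1,2,\dots,m\}$ satisfy \[ |M\cap\{1,\dots,k\}| > \tfrac{k}{2} \quad\text{and}\quad |M\cap\{m-k+1,\dots,m\}| > \tfrac{k}{2} \] for every integer $0<k\le m$. Then $M+M=\{2,3,\dots,2m\}$.
   Context: For a finite set $S$ of integers, $S+S=\{s_1+s_2 : s_1,s_2\in S\}$. *)

theory Defs
  imports Main
begin

definition sumset :: "int set \<Rightarrow> int set" where
  "sumset S = {s1 + s2 | s1 s2. s1 \<in> S \<and> s2 \<in> S}"

end

theory Submission
  imports Defs
begin

text \<open>Every target \<open>n\<close> is the sum of the endpoints of an interval lying in an initial
  segment (if \<open>n \<le> m + 1\<close>) or in a final segment (otherwise) of \<open>{1..m}\<close>. By hypothesis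
  \<open>M\<close> occupies more than half of that interval, so the reflection \<open>x \<mapsto> a + b - x\<close> of the
  interval cannot map \<open>M\<close> into its complement: some \<open>x \<in> M\<close> has \<open>a + b - x \<in> M\<close>.\<close>

lemma reflection_meets_dense_subset:
  fixes A :: "int set" and a b :: int
  assumes "A \<subseteq> {a..b}" and "card {a..b} < 2 * card A"
  shows "\<exists>x\<in>A. a + b - x \<in> A"
proof (rule ccontr)
  assume no_pair: "\<not> ?thesis"
  let ?r = "\<lambda>x. a + b - x"
  have "finite A" using assms(1) finite_subset by blast
  have "inj_on ?r A" by (auto intro: inj_onI)
  have "2 * card A = card A + card (?r ` A)"
    using card_image[OF \<open>inj_on ?r A\<close>] by simp
  also have "\<dots> = card (A \<union> ?r ` A)"
    using no_pair \<open>finite A\<close> by (intro card_Un_disjoint[symmetric]) auto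
  also have "\<dots> \<le> card {a..b}"
    using assms(1) by (intro card_mono) auto
  finally show False using assms(2) by linarith
qed

lemma sum_in_sumset_if_dense:
  fixes M :: "int set" and a b :: int
  assumes "card {a..b} < 2 * card (M \<inter> {a..b})"
  shows "a + b \<in> sumset M"
proof -
  obtain x where "x \<in> M" "a + b - x \<in> M"
    using reflection_meets_dense_subset[of "M \<inter> {a..b}" a b] assms by auto
  moreover have "a + b = x + (a + b - x)" by simp
  ultimately show ?thesis unfolding sumset_def by blast
qed

theorem lemma1:
  fixes m :: int and M :: "int set"
  assumes "m \<ge> 1"
    and "M \<subseteq> {1..m}"
    and "\<And>k. 0 < k \<Longrightarrow> k \<le> m \<Longrightarrow> 2 * int (card (M \<inter> {1..k})) > k"
    and "\<And>k. 0 < k \<Longrightarrow> k \<le> m \<Longrightarrow> 2 * int (card (M \<inter> {m-k+1..m})) > k"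
  shows "sumset M = {2..2*m}"
proof
  show "sumset M \<subseteq> {2..2*m}"
  proof
    fix n assume "n \<in> sumset M"
    then obtain x y where "x \<in> M" "y \<in> M" "n = x + y" unfolding sumset_def by blast
    moreover have "x \<in> {1..m}" "y \<in> {1..m}" using \<open>x \<in> M\<close> \<open>y \<in> M\<close> assms(2) by auto
    ultimately show "n \<in> {2..2*m}" by simp
  qed
next
  show "{2..2*m} \<subseteq> sumset M"
  proof
    fix n assume n: "n \<in> {2..2*m}"
    show "n \<in> sumset M"
    proof (cases "n \<le> m + 1")
      case True
      then have "card {1..n-1} < 2 * card (M \<inter> {1..n-1})"
        using assms(3)[of "n-1"] n by auto
      from sum_in_sumset_if_dense[OF this] show ?thesis by simp
    next
      case False
      then have "card {n-m..m} < 2 * card (M \<inter> {n-m..m})"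
        using assms(4)[of "2*m+1-n"] n by auto
      from sum_in_sumset_if_dense[OF this] show ?thesis by simp
    qed
  qed
qed

end
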